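(* $\mathrm{EquSLP}\leq_{\mathrm{P}}\mathrm{3SoSSLP}$ (polynomial-time many-one reduction).
   Context: A (division-free, constant-free) SLP computing an integer is a sequence $(b_0,\dots,b_m)$ of integers with $b_0=1$ and $b_i=b_j\circ_i b_k$ for some $j,k<i$, $\circ_i\in\{+,-,\times\}$; it computes $b_m$. $\mathrm{EquSLP}$: given an SLP computing $N\in\mathbb{Z}$, decide whether $N=0$. $\mathrm{3SoSSLP}$: given an SLP computing $N\in\mathbb{Z}$, decide whether $N=a^2+b^2+c^2$ for some integers $a,b,c$. *)

theory Defs
  imports Main
begin

datatype slp_op = Add | Sub | Mul

(* Instruction i (0-based) of a program computes b_(i+1) = b_j op b_k *)
type_synonym slp_instr = "slp_op \<times> nat \<times> nat"

fun apply_op :: "slp_op \<Rightarrow> int \<Rightarrow> int \<Rightarrow> int" where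
  "apply_op Add x y = x + y"
| "apply_op Sub x y = x - y"
| "apply_op Mul x y = x * y"

definition wf_slp :: "slp_instr list \<Rightarrow> bool" where
  "wf_slp P \<longleftrightarrow> (\<forall>i<length P. fst (snd (P ! i)) \<le> i \<and> snd (snd (P ! i)) \<le> i)"

fun slp_step :: "int list \<Rightarrow> slp_instr \<Rightarrow> int list" where
  "slp_step vs (o', j, k) = vs @ [apply_op o' (vs ! j) (vs ! k)]"

(* the sequence b_0 = 1, b_1, ..., b_m *)
definition slp_values :: "slp_instr list \<Rightarrow> int list" where
  "slp_values P = foldl slp_step [1] P"

definition slp_value :: "slp_instr list \<Rightarrow> int" where
  "slp_value P = last (slp_values P)"

definition enc_nat :: "nat \<Rightarrow> bool list" where
  "enc_nat n = replicate n True @ [False]"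

fun enc_op :: "slp_op \<Rightarrow> bool list" where
  "enc_op Add = [False, False]"
| "enc_op Sub = [False, True]"
| "enc_op Mul = [True, False]"

fun enc_instr :: "slp_instr \<Rightarrow> bool list" where
  "enc_instr (o', j, k) = enc_op o' @ enc_nat j @ enc_nat k"

definition enc_slp :: "slp_instr list \<Rightarrow> bool list" where
  "enc_slp P = concat (map enc_instr P)"

definition EquSLP :: "bool list set" where
  "EquSLP = {enc_slp P | P. wf_slp P \<and> slp_value P = 0}"

definition ThreeSoSSLP :: "bool list set" where
  "ThreeSoSSLP = {enc_slp P | P. wf_slp P \<and>
      (\<exists>a b c :: int. slp_value P = a^2 + b^2 + c^2)}"

(* states 0..<tm_states, start state 0; tape symbols 0..<tm_symbols, 0 = blank,
   1 = bit False, 2 = bit True; delta q s = (q', s', move) with move in {-1,0,1} *)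
record tm =
  tm_states :: nat
  tm_symbols :: nat
  tm_delta :: "nat \<Rightarrow> nat \<Rightarrow> nat \<times> nat \<times> int"
  tm_halt :: nat

definition valid_tm :: "tm \<Rightarrow> bool" where
  "valid_tm M \<longleftrightarrow> 3 \<le> tm_symbols M \<and> tm_halt M < tm_states M \<and>
     (\<forall>q<tm_states M. \<forall>s<tm_symbols M.
        (case tm_delta M q s of (q', s', d) \<Rightarrow>
           q' < tm_states M \<and> s' < tm_symbols M \<and> d \<in> {-1, 0, 1}))"

type_synonym tm_config = "nat \<times> int \<times> (int \<Rightarrow> nat)"

definition tm_step :: "tm \<Rightarrow> tm_config \<Rightarrow> tm_config" where
  "tm_step M c = (case c of (q, h, t) \<Rightarrow>
     if q = tm_halt M then (q, h, t)
     else (case tm_delta M q (t h) of (q', s', d) \<Rightarrow> (q', h + d, t(h := s'))))"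

definition bit_sym :: "bool \<Rightarrow> nat" where
  "bit_sym b = (if b then 2 else 1)"

definition tm_init :: "bool list \<Rightarrow> tm_config" where
  "tm_init x = (0, 0, \<lambda>i. if 0 \<le> i \<and> i < int (length x) then bit_sym (x ! nat i) else 0)"

definition tape_holds :: "(int \<Rightarrow> nat) \<Rightarrow> bool list \<Rightarrow> bool" where
  "tape_holds t y \<longleftrightarrow> (\<forall>i<length y. t (int i) = bit_sym (y ! i)) \<and> t (int (length y)) = 0"

definition computes_within :: "tm \<Rightarrow> (bool list \<Rightarrow> bool list) \<Rightarrow> (nat \<Rightarrow> nat) \<Rightarrow> bool" where
  "computes_within M f T \<longleftrightarrow> (\<forall>x. \<exists>n \<le> T (length x).
     (case (tm_step M ^^ n) (tm_init x) of (q, h, t) \<Rightarrow> q = tm_halt M \<and> tape_holds t (f x)))"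

definition poly_time_computable :: "(bool list \<Rightarrow> bool list) \<Rightarrow> bool" where
  "poly_time_computable f \<longleftrightarrow>
     (\<exists>M c k. valid_tm M \<and> computes_within M f (\<lambda>n. c * n ^ k + c))"

definition poly_reduces :: "bool list set \<Rightarrow> bool list set \<Rightarrow> bool" (infix "\<le>\<^sub>P" 50) where
  "A \<le>\<^sub>P B \<longleftrightarrow> (\<exists>f. poly_time_computable f \<and> (\<forall>x. x \<in> A \<longleftrightarrow> f x \<in> B))"

end

theory Submission
  imports Defs
begin

(* A program P computing N, followed by the instructions (Mul, m, m), (Sub, 0, 0),
   (Sub, m + 2, m + 1) with m = length P, computes -N^2, and -N^2 is a sum of three squares
   iff N = 0; appending these instructions also preserves well-formedness in both directions.
   Inputs that encode no program are sent to [True, True], which encodes none either.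
   The suffix refers to m in unary, so the Turing machine counts the instructions: after checking
   the input with a finite automaton it makes four passes over it, each appending one symbol per
   instruction, interleaved with fixed words, and finally turns these symbols into bits. Every
   pass takes O(n) steps per instruction, giving O(n^2) steps in total. *)

section \<open>Encodings of straight-line programs\<close>

lemma enc_slp_Nil [simp]: "enc_slp [] = []"
  by (simp add: enc_slp_def)

lemma enc_slp_Cons [simp]: "enc_slp (i # P) = enc_instr i @ enc_slp P"
  by (simp add: enc_slp_def)

lemma enc_slp_append: "enc_slp (P @ Q) = enc_slp P @ enc_slp Q"
  by (simp add: enc_slp_def)

lemma length_enc_op [simp]: "length (enc_op o') = 2"
  by (cases o') auto

lemma length_enc_slp_ge: "4 * length P \<le> length (enc_slp P)"
proof (induction P)
  case (Cons i P)
  then show ?case by (cases i) (simp add: enc_nat_def)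
qed simp

lemma enc_nat_append_inj: "enc_nat j @ r = enc_nat j' @ r' \<Longrightarrow> j = j' \<and> r = r'"
proof (induction j arbitrary: j')
  case 0 then show ?case by (cases j') (auto simp: enc_nat_def)
next
  case (Suc j) then show ?case by (cases j') (auto simp: enc_nat_def)
qed

lemma enc_instr_append_inj: "enc_instr a @ r = enc_instr b @ r' \<Longrightarrow> a = b \<and> r = r'"
proof -
  assume eq: "enc_instr a @ r = enc_instr b @ r'"
  obtain o1 j1 k1 o2 j2 k2 where a: "a = (o1, j1, k1)" and b: "b = (o2, j2, k2)"
    by (cases a, cases b) auto
  have "o1 = o2 \<and> enc_nat j1 @ enc_nat k1 @ r = enc_nat j2 @ enc_nat k2 @ r'"
    using eq a b by (cases o1; cases o2) auto
  then show ?thesis using a b enc_nat_append_inj by blast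
qed

lemma enc_instr_nonempty: "enc_instr a \<noteq> []"
  by (cases a) (simp add: enc_nat_def)

lemma inj_enc_slp: "inj enc_slp"
proof (rule injI)
  show "enc_slp P = enc_slp Q \<Longrightarrow> P = Q" for P Q
  proof (induction P arbitrary: Q)
    case Nil then show ?case by (cases Q) (auto simp: enc_instr_nonempty)
  next
    case (Cons a P)
    then obtain b Q' where "Q = b # Q'" by (cases Q) (auto simp: enc_instr_nonempty)
    with Cons show ?case using enc_instr_append_inj[of a "enc_slp P" b "enc_slp Q'"] by auto
  qed
qed

lemma True_True_not_enc_slp: "[True, True] \<notin> range enc_slp"
proof
  assume "[True, True] \<in> range enc_slp"
  then obtain i P where "[True, True] = enc_instr i @ enc_slp P"
    by (metis enc_slp_Cons enc_slp_Nil imageE list.distinct(1) neq_Nil_conv)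
  then show False by (cases i, rename_tac o' j k, case_tac o') auto
qed

text \<open>State 0: at an instruction boundary; 1 and 2: after the first opcode bit
  (the opcode \<open>11\<close> is rejected); 3: reading \<open>j\<close>; 4: reading \<open>k\<close>.\<close>

definition enc_dfa_step :: "nat \<Rightarrow> bool \<Rightarrow> nat option" where
  "enc_dfa_step q b =
    (if q = 0 then Some (if b then 2 else 1)
     else if q = 1 then Some 3
     else if q = 2 then (if b then None else Some 3)
     else if q = 3 then Some (if b then 3 else 4)
     else if q = 4 then Some (if b then 4 else 0)
     else None)"

fun enc_dfa_run :: "nat \<Rightarrow> bool list \<Rightarrow> nat option" where
  "enc_dfa_run q [] = Some q"
| "enc_dfa_run q (b # bs) = (case enc_dfa_step q b of None \<Rightarrow> None | Some q' \<Rightarrow> enc_dfa_run q' bs)"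

lemma enc_dfa_run_append:
  "enc_dfa_run q xs = Some q' \<Longrightarrow> enc_dfa_run q (xs @ ys) = enc_dfa_run q' ys"
  by (induction xs arbitrary: q) (auto split: option.splits)

lemma enc_dfa_run_replicate_True:
  "q = 3 \<or> q = 4 \<Longrightarrow> enc_dfa_run q (replicate j True) = Some q"
  by (induction j) (auto simp: enc_dfa_step_def)

lemma enc_dfa_run_enc_instr: "enc_dfa_run 0 (enc_instr i @ r) = enc_dfa_run 0 r"
proof -
  obtain o' j k where i: "i = (o', j, k)" by (cases i) auto
  have "enc_dfa_run 0 (enc_op o') = Some 3" by (cases o') (auto simp: enc_dfa_step_def)
  moreover have "enc_dfa_run 3 (enc_nat j) = Some 4" "enc_dfa_run 4 (enc_nat k) = Some 0"
    using enc_dfa_run_append[OF enc_dfa_run_replicate_True, of _ _ "[False]"]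
    by (auto simp: enc_nat_def enc_dfa_step_def)
  ultimately show ?thesis using i by (simp add: enc_dfa_run_append)
qed

lemma enc_dfa_run_enc_slp: "enc_dfa_run 0 (enc_slp P) = Some 0"
  using enc_dfa_run_enc_instr by (induction P) auto

lemma enc_dfa_run_unary:
  assumes "q = 3 \<or> q = 4" "enc_dfa_run q y = Some 0"
  shows "\<exists>j r. y = enc_nat j @ r \<and> enc_dfa_run (if q = 3 then 4 else 0) r = Some 0"
  using assms
proof (induction y)
  case (Cons b y)
  show ?case
  proof (cases b)
    case True
    with Cons obtain j r where "y = enc_nat j @ r" "enc_dfa_run (if q = 3 then 4 else 0) r = Some 0"
      by (auto simp: enc_dfa_step_def)
    with True show ?thesis by (intro exI[of _ "Suc j"] exI[of _ r]) (auto simp: enc_nat_def)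
  next
    case False
    with Cons.prems show ?thesis
      by (intro exI[of _ 0] exI[of _ y]) (auto simp: enc_nat_def enc_dfa_step_def)
  qed
qed simp

lemma enc_dfa_run_imp_enc_slp: "enc_dfa_run 0 x = Some 0 \<Longrightarrow> x \<in> range enc_slp"
proof (induction "length x" arbitrary: x rule: less_induct)
  case less
  show ?case
  proof (cases x)
    case Nil then show ?thesis using enc_slp_Nil by (metis rangeI)
  next
    case (Cons b1 x1)
    with less.prems obtain b2 x2 where x1: "x1 = b2 # x2"
      by (cases x1) (auto simp: enc_dfa_step_def split: if_splits)
    obtain o' where op: "enc_op o' = [b1, b2]" and "enc_dfa_run 3 x2 = Some 0"
      using less.prems Cons x1
      by (cases b1; cases b2) (auto simp: enc_dfa_step_def split: if_splits intro: enc_op.simps)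
    then obtain j k r where r: "x2 = enc_nat j @ enc_nat k @ r" "enc_dfa_run 0 r = Some 0"
      using enc_dfa_run_unary[of 3 x2] enc_dfa_run_unary[of 4] by fastforce
    then have "length r < length x" using Cons x1 by simp
    with less r obtain P where "r = enc_slp P" by blast
    with Cons x1 r op have "x = enc_slp ((o', j, k) # P)" by simp
    then show ?thesis by blast
  qed
qed

lemma enc_dfa_accepts_iff: "enc_dfa_run 0 x = Some 0 \<longleftrightarrow> x \<in> range enc_slp"
  using enc_dfa_run_imp_enc_slp enc_dfa_run_enc_slp by blast

section \<open>The reduction\<close>

lemma length_slp_values: "length (slp_values P) = length P + 1"
  unfolding slp_values_def
proof (induction P rule: rev_induct)
  case (snoc a P)
  then show ?case by (cases a) simp
qed simp

lemma slp_values_nth_0: "slp_values P ! 0 = 1"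
  unfolding slp_values_def
proof (induction P rule: rev_induct)
  case (snoc a P)
  moreover have "foldl slp_step [1] P \<noteq> []"
    using length_slp_values[of P] by (auto simp: slp_values_def)
  ultimately show ?case by (cases a) (simp add: nth_append)
qed simp

text \<open>The three instructions compute \<open>b\<^sub>m\<^sup>2\<close>, \<open>b\<^sub>0 - b\<^sub>0 = 0\<close> and \<open>0 - b\<^sub>m\<^sup>2\<close>.\<close>

definition neg_square_suffix :: "nat \<Rightarrow> slp_instr list" where
  "neg_square_suffix m = [(Mul, m, m), (Sub, 0, 0), (Sub, m + 2, m + 1)]"

lemma slp_value_neg_square_suffix:
  "slp_value (P @ neg_square_suffix (length P)) = - (slp_value P)\<^sup>2"
proof -
  define vs where "vs = slp_values P"
  have len: "length vs = length P + 1" using length_slp_values vs_def by simp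
  have "slp_values (P @ neg_square_suffix (length P)) = foldl slp_step vs (neg_square_suffix (length P))"
    by (simp add: slp_values_def vs_def)
  also have "\<dots> = vs @ [vs ! length P * vs ! length P, 0, - (vs ! length P * vs ! length P)]"
    using len slp_values_nth_0[of P] by (simp add: neg_square_suffix_def nth_append vs_def)
  moreover have "last vs = vs ! length P"
    using len last_conv_nth[of vs] by fastforce
  ultimately show ?thesis
    by (simp add: slp_value_def vs_def power2_eq_square)
qed

lemma wf_slp_neg_square_suffix_iff: "wf_slp (P @ neg_square_suffix (length P)) \<longleftrightarrow> wf_slp P"
proof
  assume "wf_slp (P @ neg_square_suffix (length P))"
  then show "wf_slp P" unfolding wf_slp_def
    by (metis length_append nth_append trans_less_add1)
next
  assume wf: "wf_slp P"
  show "wf_slp (P @ neg_square_suffix (length P))"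
    unfolding wf_slp_def
  proof (intro allI impI)
    fix i assume i: "i < length (P @ neg_square_suffix (length P))"
    show "fst (snd ((P @ neg_square_suffix (length P)) ! i)) \<le> i \<and>
        snd (snd ((P @ neg_square_suffix (length P)) ! i)) \<le> i"
    proof (cases "i < length P")
      case True with wf show ?thesis by (simp add: wf_slp_def nth_append)
    next
      case False
      with i have "i - length P \<in> {0, 1, 2}" by (auto simp: neg_square_suffix_def)
      with False show ?thesis by (auto simp: nth_append neg_square_suffix_def)
    qed
  qed
qed

lemma neg_square_sum_three_squares_iff:
  "(\<exists>a b c :: int. - (N\<^sup>2) = a\<^sup>2 + b\<^sup>2 + c\<^sup>2) \<longleftrightarrow> N = 0"
proof
  assume "\<exists>a b c :: int. - (N\<^sup>2) = a\<^sup>2 + b\<^sup>2 + c\<^sup>2"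
  then obtain a b c :: int where "- (N\<^sup>2) = a\<^sup>2 + b\<^sup>2 + c\<^sup>2" by blast
  moreover have "a\<^sup>2 \<ge> 0" "b\<^sup>2 \<ge> 0" "c\<^sup>2 \<ge> 0" "N\<^sup>2 \<ge> 0" by auto
  ultimately have "N\<^sup>2 = 0" by linarith
  then show "N = 0" by simp
qed (intro exI[of _ 0], simp)

definition equ_to_sos :: "bool list \<Rightarrow> bool list" where
  "equ_to_sos x =
    (if x \<in> range enc_slp
     then enc_slp (inv enc_slp x @ neg_square_suffix (length (inv enc_slp x)))
     else [True, True])"

lemma equ_to_sos_enc_slp:
  "equ_to_sos (enc_slp P) = enc_slp (P @ neg_square_suffix (length P))"
  by (simp add: equ_to_sos_def inj_enc_slp)

lemma enc_slp_mem_EquSLP_iff: "enc_slp P \<in> EquSLP \<longleftrightarrow> wf_slp P \<and> slp_value P = 0"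
  unfolding EquSLP_def using inj_enc_slp by (auto dest: injD)

lemma enc_slp_mem_ThreeSoSSLP_iff:
  "enc_slp P \<in> ThreeSoSSLP \<longleftrightarrow> wf_slp P \<and> (\<exists>a b c :: int. slp_value P = a\<^sup>2 + b\<^sup>2 + c\<^sup>2)"
  unfolding ThreeSoSSLP_def using inj_enc_slp by (auto dest: injD)

lemma equ_to_sos_correct: "x \<in> EquSLP \<longleftrightarrow> equ_to_sos x \<in> ThreeSoSSLP"
proof (cases "x \<in> range enc_slp")
  case True
  then obtain P where "x = enc_slp P" by blast
  then show ?thesis
    by (simp add: equ_to_sos_enc_slp enc_slp_mem_EquSLP_iff enc_slp_mem_ThreeSoSSLP_iff
        wf_slp_neg_square_suffix_iff slp_value_neg_square_suffix neg_square_sum_three_squares_iff)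
next
  case False
  then have "x \<notin> EquSLP" "[True, True] \<notin> ThreeSoSSLP"
    using True_True_not_enc_slp unfolding EquSLP_def ThreeSoSSLP_def by auto
  with False show ?thesis by (simp add: equ_to_sos_def)
qed

section \<open>Runs of Turing machines\<close>

definition tape_of :: "nat list \<Rightarrow> int \<Rightarrow> nat" where
  "tape_of w i = (if 0 \<le> i \<and> i < int (length w) then w ! nat i else 0)"

lemma tape_of_nth [simp]: "i < length w \<Longrightarrow> tape_of w (int i) = w ! i"
  by (simp add: tape_of_def)

lemma tape_of_beyond [simp]: "int (length w) \<le> i \<Longrightarrow> tape_of w i = 0"
  by (simp add: tape_of_def)

lemma tape_of_length: "tape_of w (int (length w)) = 0"
  by simp

lemma tape_of_neg [simp]: "i < 0 \<Longrightarrow> tape_of w i = 0"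
  by (simp add: tape_of_def)

lemma tape_of_update: "i < length w \<Longrightarrow> (tape_of w)(int i := s) = tape_of (w[i := s])"
  by (auto simp: tape_of_def fun_eq_iff nth_list_update nat_eq_iff)

lemma tape_of_snoc: "(tape_of w)(int (length w) := s) = tape_of (w @ [s])"
  by (auto simp: tape_of_def fun_eq_iff nth_append nat_less_iff)

lemma tm_init_eq_tape_of: "tm_init x = (0, 0, tape_of (map bit_sym x))"
  unfolding tm_init_def tape_of_def by (auto simp: fun_eq_iff)

lemma tape_holds_tape_of: "tape_holds (tape_of (map bit_sym y)) y"
  using tape_of_length[of "map bit_sym y"] by (simp add: tape_holds_def)

definition reaches :: "tm \<Rightarrow> nat \<Rightarrow> tm_config \<Rightarrow> tm_config \<Rightarrow> bool" where
  "reaches M T c c' \<longleftrightarrow> (\<exists>n\<le>T. (tm_step M ^^ n) c = c')"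

lemma reaches_refl: "reaches M 0 c c"
  unfolding reaches_def by (intro exI[of _ 0]) simp

lemma reaches_trans [trans]:
  assumes "reaches M T1 a b" "reaches M T2 b c"
  shows "reaches M (T1 + T2) a c"
proof -
  obtain n1 n2 where "n1 \<le> T1" "(tm_step M ^^ n1) a = b" "n2 \<le> T2" "(tm_step M ^^ n2) b = c"
    using assms unfolding reaches_def by blast
  then show ?thesis
    unfolding reaches_def by (intro exI[of _ "n2 + n1"]) (simp add: funpow_add)
qed

lemma reaches_mono: "reaches M T a b \<Longrightarrow> T \<le> T' \<Longrightarrow> reaches M T' a b"
  unfolding reaches_def using le_trans by blast

lemma reaches_step:
  assumes "q \<noteq> tm_halt M" "tm_delta M q (t h) = (q', s', d)"
    and "h + d = h'" "t(h := s') = t'"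
  shows "reaches M 1 (q, h, t) (q', h', t')"
  unfolding reaches_def using assms by (intro exI[of _ 1]) (simp add: tm_step_def)

lemma reaches_halt_imp_computes_within:
  assumes "\<And>x. \<exists>h t. reaches M (T (length x)) (tm_init x) (tm_halt M, h, t) \<and> tape_holds t (f x)"
  shows "computes_within M f T"
  unfolding computes_within_def
proof
  fix x
  obtain h t n where "n \<le> T (length x)" "(tm_step M ^^ n) (tm_init x) = (tm_halt M, h, t)"
    and "tape_holds t (f x)"
    using assms[of x] unfolding reaches_def by blast
  then show "\<exists>n\<le>T (length x). case (tm_step M ^^ n) (tm_init x) of
      (q, h, t) \<Rightarrow> q = tm_halt M \<and> tape_holds t (f x)"
    by (intro exI[of _ n]) simp
qed

lemma reaches_step_right:
  assumes "q \<noteq> tm_halt M" "n < length w" "tm_delta M q (w ! n) = (q', s', 1)"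
  shows "reaches M 1 (q, int n, tape_of w) (q', int (Suc n), tape_of (w[n := s']))"
  using assms by (intro reaches_step) (simp_all add: tape_of_update)

lemma reaches_step_right_keep:
  assumes "q \<noteq> tm_halt M" "n < length w" "tm_delta M q (w ! n) = (q', w ! n, 1)" "Suc n = n'"
  shows "reaches M 1 (q, int n, tape_of w) (q', int n', tape_of w)"
  using reaches_step_right[OF assms(1-3)] assms(4) by simp

lemma reaches_step_left_at_end:
  assumes "q \<noteq> tm_halt M" "tm_delta M q 0 = (q', s', -1)" "0 < length w"
  shows "reaches M 1 (q, int (length w), tape_of w) (q', int (length w - 1), tape_of (w @ [s']))"
  using assms by (intro reaches_step) (simp_all add: tape_of_snoc of_nat_diff Suc_le_eq)

lemma reaches_sweep_right:
  assumes "\<And>s. s \<in> S \<Longrightarrow> tm_delta M q s = (q, s, 1)" "q \<noteq> tm_halt M"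
    and "\<forall>i<k. t (h + int i) \<in> S"
  shows "reaches M k (q, h, t) (q, h + int k, t)"
proof -
  have "(tm_step M ^^ k) (q, h, t) = (q, h + int k, t)" using assms(3)
  proof (induction k arbitrary: h)
    case (Suc k)
    have "t h \<in> S" using Suc.prems[rule_format, of 0] by simp
    then have "tm_step M (q, h, t) = (q, h + 1, t)" using assms(1,2) by (simp add: tm_step_def)
    moreover have "\<forall>i<k. t (h + 1 + int i) \<in> S"
      using Suc.prems by (metis Suc_less_eq add.commute add.left_commute of_nat_Suc)
    ultimately show ?case
      using Suc.IH[of "h + 1"] by (simp only: funpow_Suc_right comp_apply) (simp add: algebra_simps)
  qed simp
  then show ?thesis unfolding reaches_def by blast
qed

lemma reaches_sweep_left:
  assumes "\<And>s. s \<in> S \<Longrightarrow> tm_delta M q s = (q, s, -1)" "q \<noteq> tm_halt M"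
    and "\<forall>i<k. t (h - int i) \<in> S"
  shows "reaches M k (q, h, t) (q, h - int k, t)"
proof -
  have "(tm_step M ^^ k) (q, h, t) = (q, h - int k, t)" using assms(3)
  proof (induction k arbitrary: h)
    case (Suc k)
    have "t h \<in> S" using Suc.prems[rule_format, of 0] by simp
    then have "tm_step M (q, h, t) = (q, h - 1, t)" using assms(1,2) by (simp add: tm_step_def)
    moreover have "\<forall>i<k. t (h - 1 - int i) \<in> S"
      using Suc.prems by (metis Suc_less_eq diff_diff_eq of_nat_Suc)
    ultimately show ?case
      using Suc.IH[of "h - 1"] by (simp only: funpow_Suc_right comp_apply) (simp add: algebra_simps)
  qed simp
  then show ?thesis unfolding reaches_def by blast
qed

lemma reaches_sweep_right_list:
  assumes "\<And>s. s \<in> S \<Longrightarrow> tm_delta M q s = (q, s, 1)" "q \<noteq> tm_halt M"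
    and "n + k \<le> length w" "\<forall>i<k. w ! (n + i) \<in> S"
  shows "reaches M k (q, int n, tape_of w) (q, int (n + k), tape_of w)"
proof -
  have "tape_of w (int n + int i) \<in> S" if "i < k" for i
    using that assms(3,4) tape_of_nth[of "n + i" w] by simp
  from reaches_sweep_right[OF assms(1,2)] this show ?thesis by simp
qed

lemma reaches_sweep_left_list:
  assumes "\<And>s. s \<in> S \<Longrightarrow> tm_delta M q s = (q, s, -1)" "q \<noteq> tm_halt M"
    and "k \<le> n" "n < length w" "\<forall>i<k. w ! (n - i) \<in> S"
  shows "reaches M k (q, int n, tape_of w) (q, int (n - k), tape_of w)"
proof -
  have "tape_of w (int n - int i) \<in> S" if "i < k" for i
    using that assms(3-5) tape_of_nth[of "n - i" w] by (simp add: of_nat_diff)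
  from reaches_sweep_left[OF assms(1,2)] this show ?thesis using assms(3) by (simp add: of_nat_diff)
qed

section \<open>A Turing machine computing the reduction\<close>

text \<open>Tape symbols: 0 blank, 1 and 2 the bits \<open>False\<close> and \<open>True\<close>, 3 and 4 the same bits
  marked, 5 and 6 the pending bits \<open>True\<close> and \<open>False\<close> of the output suffix.
  With \<open>m = length P\<close>, the suffix \<open>enc_slp (neg_square_suffix m)\<close> reads, in pending symbols,
  \<open>w\<^sub>0 5\<^sup>m w\<^sub>1 5\<^sup>m w\<^sub>2 5\<^sup>m w\<^sub>3 5\<^sup>m w\<^sub>4\<close> with \<open>w\<^sub>c = phase_word c\<close>.\<close>

definition phase_word :: "nat \<Rightarrow> nat list" where
  "phase_word c =
    (if c = 0 then [5, 6] else if c = 1 then [6] else if c = 2 then [6, 6, 5, 6, 6, 6, 5, 5, 5]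
     else if c = 3 then [6, 5] else if c = 4 then [6] else [])"

lemma phase_word_symbols: "s \<in> set (phase_word c) \<Longrightarrow> s = 5 \<or> s = 6"
  unfolding phase_word_def by (auto split: if_splits)

lemma length_phase_word_le: "length (phase_word c) \<le> 9"
  unfolding phase_word_def by auto

lemma phase_word_nonempty: "c \<le> 4 \<Longrightarrow> phase_word c \<noteq> []"
  unfolding phase_word_def by auto

text \<open>States 0--4 run \<open>enc_dfa_step\<close>. State 5 rewinds after a rejection, and 6--8 then
  write \<open>True True\<close> followed by a blank. State 9 turns the pending symbols into bits,
  right to left.\<close>

definition count_state :: "nat \<Rightarrow> nat \<Rightarrow> nat" where
  "count_state p r = 10 * p + r"

definition write_state :: "nat \<Rightarrow> nat \<Rightarrow> nat" where
  "write_state c i = 100 + 20 * c + i"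

definition control_delta :: "nat \<Rightarrow> nat \<Rightarrow> nat \<times> nat \<times> int" where
  "control_delta q s =
    (if q = 0 then (if s = 1 then (1, 1, 1) else if s = 2 then (2, 2, 1)
                    else if s = 0 then (write_state 0 0, 0, 0) else (200, s, 0))
     else if q = 1 then (if s = 0 then (5, 0, -1) else (3, s, 1))
     else if q = 2 then (if s = 1 then (3, 1, 1) else (5, s, -1))
     else if q = 3 then (if s = 2 then (3, 2, 1) else if s = 1 then (4, 1, 1) else (5, s, -1))
     else if q = 4 then (if s = 2 then (4, 2, 1) else if s = 1 then (0, 1, 1) else (5, s, -1))
     else if q = 5 then (if s = 0 then (6, 0, 1) else (5, s, -1))
     else if q = 6 then (7, 2, 1) else if q = 7 then (8, 2, 1) else if q = 8 then (200, 0, 0)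
     else if q = 9 then (if s = 5 then (9, 2, -1) else if s = 6 then (9, 1, -1) else (200, s, 0))
     else (200, s, 0))"

text \<open>Phase \<open>p\<close> (states \<open>count_state p r\<close>) appends one pending \<open>True\<close> per input instruction:
  it marks the first bit of the instruction (\<open>r = 0\<close>), runs to the right end and appends 5
  (\<open>r = 1\<close>), returns to the mark and restores it (\<open>r = 2\<close>), and skips the rest of the
  instruction (\<open>r = 3, 4, 5\<close>). On reaching the pending region it moves to the right end
  (\<open>r = 6\<close>) and writes \<open>phase_word p\<close>; \<open>r = 7\<close> rewinds to cell 0.\<close>

definition count_delta :: "nat \<Rightarrow> nat \<Rightarrow> nat \<Rightarrow> nat \<times> nat \<times> int" where
  "count_delta p r s =
    (if r = 0 then (if s = 1 then (count_state p 1, 3, 1) else if s = 2 then (count_state p 1, 4, 1)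
                    else (count_state p 6, s, 0))
     else if r = 1 then (if s = 0 then (count_state p 2, 5, -1) else (count_state p 1, s, 1))
     else if r = 2 then (if s = 3 then (count_state p 3, 1, 1) else if s = 4 then (count_state p 3, 2, 1)
                         else (count_state p 2, s, -1))
     else if r = 3 then (count_state p 4, s, 1)
     else if r = 4 then (if s = 2 then (count_state p 4, 2, 1) else (count_state p 5, s, 1))
     else if r = 5 then (if s = 2 then (count_state p 5, 2, 1) else (count_state p 0, s, 1))
     else if r = 6 then (if s = 0 then (write_state p 0, 0, 0) else (count_state p 6, s, 1))
     else if r = 7 then (if s = 0 then (count_state p 0, 0, 1) else (count_state p 7, s, -1))
     else (200, s, 0))"

definition after_phase_word :: "nat \<Rightarrow> nat" where
  "after_phase_word c = (if c < 4 then count_state (c + 1) 7 else 9)"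

definition write_delta :: "nat \<Rightarrow> nat \<Rightarrow> nat \<Rightarrow> nat \<times> nat \<times> int" where
  "write_delta c i s =
    (if c \<le> 4 \<and> i < length (phase_word c) then (write_state c (i + 1), phase_word c ! i, 1)
     else if c \<le> 4 \<and> i = length (phase_word c) then (after_phase_word c, s, -1)
     else (200, s, 0))"

definition reduction_delta :: "nat \<Rightarrow> nat \<Rightarrow> nat \<times> nat \<times> int" where
  "reduction_delta q s =
    (if q < 10 then control_delta q s
     else if q < 50 then count_delta (q div 10) (q mod 10) s
     else if 100 \<le> q \<and> q < 200 then write_delta ((q - 100) div 20) ((q - 100) mod 20) s
     else (200, s, 0))"

definition reduction_tm :: tm where
  "reduction_tm = \<lparr>tm_states = 201, tm_symbols = 7, tm_delta = reduction_delta, tm_halt = 200\<rparr>"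

lemma reduction_tm_simps [simp]:
  "tm_delta reduction_tm = reduction_delta" "tm_halt reduction_tm = 200"
  by (simp_all add: reduction_tm_def)

lemma reduction_delta_count:
  assumes "1 \<le> p" "p \<le> 4" "r < 10"
  shows "reduction_delta (count_state p r) s = count_delta p r s"
proof -
  have "(10 * p + r) div 10 = p" "(10 * p + r) mod 10 = r" "\<not> 10 * p + r < 10" "10 * p + r < 50"
    using assms by auto
  then show ?thesis unfolding reduction_delta_def count_state_def by presburger
qed

lemma count_state_not_halt [simp]: "p \<le> 4 \<Longrightarrow> r < 10 \<Longrightarrow> count_state p r \<noteq> 200"
  by (simp add: count_state_def)

lemma reduction_delta_write:
  assumes "c \<le> 4" "i < 20"
  shows "reduction_delta (write_state c i) s = write_delta c i s"
proof -
  have "(100 + 20 * c + i - 100) div 20 = c" "(100 + 20 * c + i - 100) mod 20 = i"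
    "100 + 20 * c + i < 200"
    using assms by auto
  then show ?thesis unfolding reduction_delta_def write_state_def by simp
qed

lemma write_state_not_halt [simp]: "c \<le> 4 \<Longrightarrow> i < 20 \<Longrightarrow> write_state c i \<noteq> 200"
  by (simp add: write_state_def)

lemma valid_reduction_tm: "valid_tm reduction_tm"
proof -
  have "case reduction_delta q s of (q', s', d) \<Rightarrow> q' < 201 \<and> s' < 7 \<and> d \<in> {-1, 0, 1}"
    if "q < 201" "s < 7" for q s
  proof -
    consider "q < 10" | "10 \<le> q" "q < 50" | "100 \<le> q" "q < 200" | "50 \<le> q" "q < 100" | "q = 200"
      using \<open>q < 201\<close> by linarith
    then show ?thesis
    proof cases
      case 1
      then have "q \<in> {0, 1, 2, 3, 4, 5, 6, 7, 8, 9}" by auto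
      with 1 \<open>s < 7\<close> show ?thesis
        by (auto simp: reduction_delta_def control_delta_def write_state_def)
    next
      case 2
      then have "q div 10 \<le> 4" by auto
      with 2 \<open>s < 7\<close> show ?thesis
        by (auto simp: reduction_delta_def count_delta_def count_state_def write_state_def)
    next
      case 3
      define c i where "c = (q - 100) div 20" and "i = (q - 100) mod 20"
      have "c \<le> 4" using 3 by (auto simp: c_def)
      have "phase_word c ! i < 7" if "i < length (phase_word c)"
        using phase_word_symbols[OF nth_mem[OF that]] by auto
      moreover have "100 + 20 * c + i + 1 < 201" if "i < length (phase_word c)"
        using that length_phase_word_le[of c] \<open>c \<le> 4\<close> by linarith
      ultimately show ?thesis using 3 \<open>s < 7\<close> \<open>c \<le> 4\<close>
        by (auto simp: reduction_delta_def write_delta_def after_phase_word_def count_state_def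
            write_state_def simp flip: c_def i_def)
    qed (use \<open>s < 7\<close> in \<open>auto simp: reduction_delta_def\<close>)
  qed
  then show ?thesis unfolding valid_tm_def reduction_tm_def by simp
qed

abbreviation reaches_red :: "nat \<Rightarrow> tm_config \<Rightarrow> tm_config \<Rightarrow> bool" where
  "reaches_red \<equiv> reaches reduction_tm"

lemma reduction_delta_dfa_step:
  assumes "q \<le> 4" "enc_dfa_step q b = Some q'"
  shows "reduction_delta q (bit_sym b) = (q', bit_sym b, 1)"
proof -
  from assms(1) have "q \<in> {0, 1, 2, 3, 4}" by auto
  with assms(2) show ?thesis
    by (cases b) (auto simp: reduction_delta_def control_delta_def enc_dfa_step_def bit_sym_def)
qed

lemma reduction_delta_dfa_reject:
  assumes "q \<le> 4" "enc_dfa_step q b = None"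
  shows "reduction_delta q (bit_sym b) = (5, bit_sym b, -1)"
proof -
  from assms(1) have "q \<in> {0, 1, 2, 3, 4}" by auto
  with assms(2) show ?thesis
    by (cases b) (auto simp: reduction_delta_def control_delta_def enc_dfa_step_def bit_sym_def)
qed

lemma reduction_delta_dfa_blank: "q \<le> 4 \<Longrightarrow> q \<noteq> 0 \<Longrightarrow> reduction_delta q 0 = (5, 0, -1)"
  by (auto simp: reduction_delta_def control_delta_def)

lemma enc_dfa_step_le_4: "enc_dfa_step q b = Some q' \<Longrightarrow> q' \<le> 4"
  by (auto simp: enc_dfa_step_def split: if_splits)

lemma tape_matches_Cons:
  "\<forall>i<length (b # bs). t (int (n + i)) = bit_sym ((b # bs) ! i) \<Longrightarrow>
    t (int n) = bit_sym b \<and> (\<forall>i<length bs. t (int (Suc n + i)) = bit_sym (bs ! i))"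
  by (metis Suc_less_eq add.right_neutral add_Suc_shift length_Cons nth_Cons_0 nth_Cons_Suc zero_less_Suc)

lemma checker_run_accepting:
  assumes "q \<le> 4" "enc_dfa_run q bs = Some 0" "\<forall>i<length bs. t (int (n + i)) = bit_sym (bs ! i)"
  shows "reaches_red (length bs) (q, int n, t) (0, int (n + length bs), t)"
  using assms
proof (induction bs arbitrary: q n)
  case (Cons b bs)
  then obtain q' where q': "enc_dfa_step q b = Some q'" "enc_dfa_run q' bs = Some 0"
    by (auto split: option.splits)
  have tape: "t (int n) = bit_sym b" "\<forall>i<length bs. t (int (Suc n + i)) = bit_sym (bs ! i)"
    using tape_matches_Cons[OF Cons.prems(3)] by blast+
  with Cons.prems(1) q' have "reaches_red 1 (q, int n, t) (q', int (Suc n), t)"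
    by (intro reaches_step) (auto simp: reduction_delta_dfa_step)
  also have "reaches_red (length bs) \<dots> (0, int (Suc n + length bs), t)"
    using Cons.IH enc_dfa_step_le_4[OF q'(1)] q'(2) tape(2) by blast
  finally show ?case by simp
qed (simp add: reaches_refl)

lemma checker_run_rejecting:
  assumes "q \<le> 4" "enc_dfa_run q bs \<noteq> Some 0"
    and "\<forall>i<length bs. t (int (n + i)) = bit_sym (bs ! i)" "t (int (n + length bs)) = 0"
  shows "\<exists>h. int n - 1 \<le> h \<and> (q = 0 \<longrightarrow> int n \<le> h) \<and> h < int (n + length bs) \<and>
    reaches_red (length bs + 1) (q, int n, t) (5, h, t)"
  using assms
proof (induction bs arbitrary: q n)
  case Nil
  then have "reaches_red 1 (q, int n, t) (5, int n - 1, t)"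
    by (intro reaches_step) (auto simp: reduction_delta_dfa_blank)
  with Nil.prems(2) show ?case by auto
next
  case (Cons b bs)
  have tape: "t (int n) = bit_sym b" "\<forall>i<length bs. t (int (Suc n + i)) = bit_sym (bs ! i)"
    using tape_matches_Cons[OF Cons.prems(3)] by blast+
  show ?case
  proof (cases "enc_dfa_step q b")
    case None
    with Cons.prems(1) tape(1) have "reaches_red 1 (q, int n, t) (5, int n - 1, t)"
      by (intro reaches_step) (auto simp: reduction_delta_dfa_reject)
    moreover have "q \<noteq> 0" using None by (auto simp: enc_dfa_step_def split: if_splits)
    ultimately show ?thesis by (auto intro: reaches_mono)
  next
    case (Some q')
    with Cons.prems(1) tape(1) have "reaches_red 1 (q, int n, t) (q', int (Suc n), t)"
      by (intro reaches_step) (auto simp: reduction_delta_dfa_step)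
    moreover obtain h where "int (Suc n) - 1 \<le> h" "h < int (Suc n + length bs)"
      "reaches_red (length bs + 1) (q', int (Suc n), t) (5, h, t)"
      using Cons.IH[of q' "Suc n"] enc_dfa_step_le_4[OF Some] Some Cons.prems(2,4) tape(2) by auto
    ultimately show ?thesis by (intro exI[of _ h]) (auto dest: reaches_trans)
  qed
qed

lemma checker_accepts:
  assumes "enc_dfa_run 0 x = Some 0"
  shows "reaches_red (length x) (0, 0, tape_of (map bit_sym x)) (0, int (length x), tape_of (map bit_sym x))"
  using checker_run_accepting[of 0 x "tape_of (map bit_sym x)" 0] assms by simp

lemma checker_rejects:
  assumes "enc_dfa_run 0 x \<noteq> Some 0"
  obtains n where "n < length x"
    "reaches_red (length x + 1) (0, 0, tape_of (map bit_sym x)) (5, int n, tape_of (map bit_sym x))"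
proof -
  obtain h where "0 \<le> h" "h < int (length x)"
    "reaches_red (length x + 1) (0, 0, tape_of (map bit_sym x)) (5, h, tape_of (map bit_sym x))"
    using checker_run_rejecting[of 0 x "tape_of (map bit_sym x)" 0] tape_of_length[of "map bit_sym x"] assms
    by auto
  then show ?thesis using that by (metis nonneg_eq_int of_nat_less_iff)
qed

lemma rewind_to_start:
  assumes "1 \<le> p" "p \<le> 4" "0 \<notin> set w" "j < length w"
  shows "reaches_red (j + 2) (count_state p 7, int j, tape_of w) (count_state p 0, 0, tape_of w)"
proof -
  have delta: "reduction_delta (count_state p 7) s =
      (if s = 0 then (count_state p 0, 0, 1) else (count_state p 7, s, -1))" for s
    using reduction_delta_count[of p 7 s] assms(1,2) by (simp add: count_delta_def)
  have "tape_of w (int j - int i) \<noteq> 0" if "i < Suc j" for i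
  proof -
    from that assms(4) have "j - i < length w" "int j - int i = int (j - i)" by auto
    with assms(3) show ?thesis by (metis nth_mem tape_of_nth)
  qed
  then have "reaches_red (Suc j) (count_state p 7, int j, tape_of w) (count_state p 7, int j - int (Suc j), tape_of w)"
    using assms(1,2) by (intro reaches_sweep_left[of "{s. s \<noteq> 0}"]) (simp_all add: delta)
  moreover have "reaches_red 1 (count_state p 7, -1, tape_of w) (count_state p 0, 0, tape_of w)"
    using assms(1,2) by (intro reaches_step) (simp_all add: delta fun_upd_idem_iff)
  ultimately show ?thesis using reaches_trans by fastforce
qed

lemma write_phase_word_prefix:
  assumes "c \<le> 4" "i \<le> length (phase_word c)"
  shows "reaches_red i (write_state c 0, int (length w), tape_of w)
    (write_state c i, int (length w + i), tape_of (w @ take i (phase_word c)))"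
  using assms(2)
proof (induction i)
  case (Suc i)
  then have i: "i < length (phase_word c)" by simp
  have len: "length (w @ take i (phase_word c)) = length w + i" using i by simp
  have "reaches_red 1 (write_state c i, int (length w + i), tape_of (w @ take i (phase_word c)))
      (write_state c (Suc i), int (length w + Suc i), tape_of (w @ take (Suc i) (phase_word c)))"
  proof (rule reaches_step)
    show "tm_delta reduction_tm (write_state c i) (tape_of (w @ take i (phase_word c)) (int (length w + i)))
        = (write_state c (Suc i), phase_word c ! i, 1)"
      using len i assms(1) length_phase_word_le[of c]
      by (simp add: reduction_delta_write write_delta_def)
    show "(tape_of (w @ take i (phase_word c)))(int (length w + i) := phase_word c ! i) =
        tape_of (w @ take (Suc i) (phase_word c))"
      using tape_of_snoc[of "w @ take i (phase_word c)" "phase_word c ! i"] len i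
      by (simp add: take_Suc_conv_app_nth)
  qed (use i assms(1) length_phase_word_le[of c] in simp_all)
  with Suc show ?case using reaches_trans by fastforce
qed (simp add: reaches_refl)

lemma write_phase_word:
  assumes "c \<le> 4"
  shows "reaches_red (length (phase_word c) + 1) (write_state c 0, int (length w), tape_of w)
    (after_phase_word c, int (length w + length (phase_word c) - 1), tape_of (w @ phase_word c))"
proof -
  let ?w' = "w @ phase_word c"
  have "reaches_red (length (phase_word c)) (write_state c 0, int (length w), tape_of w)
      (write_state c (length (phase_word c)), int (length ?w'), tape_of ?w')"
    using write_phase_word_prefix[OF assms order_refl, of w] by simp
  also have "reaches_red 1 \<dots> (after_phase_word c, int (length ?w') - 1, tape_of ?w')"
    using assms length_phase_word_le[of c]
    by (intro reaches_step) (simp_all add: reduction_delta_write write_delta_def fun_upd_idem_iff)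
  also have "int (length ?w') - 1 = int (length w + length (phase_word c) - 1)"
    using phase_word_nonempty[OF assms] by (cases "phase_word c") auto
  finally show ?thesis by simp
qed

lemma append_pending_true:
  assumes p: "1 \<le> p" "p \<le> 4" and h: "h < length W" "W ! h \<in> {1, 2}"
    and W: "set W \<subseteq> {1, 2, 5, 6}"
  shows "reaches_red (2 * length W + 1) (count_state p 0, int h, tape_of W) (count_state p 3, int (Suc h), tape_of (W @ [5]))"
proof -
  define N where "N = length W"
  define W1 where "W1 = W[h := W ! h + 2]"
  have len1: "length W1 = N" by (simp add: W1_def N_def)
  have W1_nth: "W1 ! i = W ! i" if "i \<noteq> h" for i using that by (simp add: W1_def)
  have cells: "W ! i \<in> {1, 2, 5, 6}" if "i < N" for i using that W nth_mem by (auto simp: N_def)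
  have "reaches_red 1 (count_state p 0, int h, tape_of W) (count_state p 1, int (Suc h), tape_of W1)"
    using p h unfolding W1_def
    by (intro reaches_step_right) (auto simp: reduction_delta_count count_delta_def)
  also have "reaches_red (N - Suc h) \<dots> (count_state p 1, int (Suc h + (N - Suc h)), tape_of W1)"
  proof (rule reaches_sweep_right_list[of "{s. s \<noteq> 0}"])
    show "\<forall>i<N - Suc h. W1 ! (Suc h + i) \<in> {s. s \<noteq> 0}"
    proof (intro allI impI)
      fix i assume "i < N - Suc h"
      then have "Suc h + i < N" "Suc h + i \<noteq> h" by auto
      with cells W1_nth show "W1 ! (Suc h + i) \<in> {s. s \<noteq> 0}" by fastforce
    qed
  qed (use p len1 h in \<open>auto simp: reduction_delta_count count_delta_def N_def\<close>)
  also have "reaches_red 1 \<dots> (count_state p 2, int (N - 1), tape_of (W1 @ [5]))"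
    using p h len1 reaches_step_left_at_end[of "count_state p 1" reduction_tm "count_state p 2" 5 W1]
    by (cases W) (simp_all add: reduction_delta_count count_delta_def N_def)
  also have "reaches_red (N - 1 - h) \<dots> (count_state p 2, int (N - 1 - (N - 1 - h)), tape_of (W1 @ [5]))"
  proof (rule reaches_sweep_left_list[of "{s. s \<noteq> 3 \<and> s \<noteq> 4}"])
    show "\<forall>i<N - 1 - h. (W1 @ [5]) ! (N - 1 - i) \<in> {s. s \<noteq> 3 \<and> s \<noteq> 4}"
    proof (intro allI impI)
      fix i assume "i < N - 1 - h"
      then have "N - 1 - i < N" "N - 1 - i \<noteq> h" by auto
      with cells W1_nth len1 show "(W1 @ [5]) ! (N - 1 - i) \<in> {s. s \<noteq> 3 \<and> s \<noteq> 4}"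
        by (fastforce simp: nth_append)
    qed
  qed (use p len1 h in \<open>auto simp: reduction_delta_count count_delta_def N_def\<close>)
  also have "reaches_red 1 \<dots> (count_state p 3, int (Suc h), tape_of (W @ [5]))"
  proof -
    have "(W1 @ [5]) ! h = W ! h + 2" "(W1 @ [5])[h := W ! h] = W @ [5]"
      using h by (simp_all add: W1_def nth_append list_update_append)
    then show ?thesis
      using p h len1 reaches_step_right[of "count_state p 2" reduction_tm h "W1 @ [5]" "count_state p 3" "W ! h"]
      by (auto simp: reduction_delta_count count_delta_def N_def)
  qed
  finally show ?thesis
    using h by (elim reaches_mono) (simp add: N_def)
qed

lemma skip_instruction_tail:
  assumes p: "1 \<le> p" "p \<le> 4"
    and V: "V = U @ [a, b] @ replicate j 2 @ 1 # replicate k 2 @ 1 # U'"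
  shows "reaches_red (j + k + 3) (count_state p 3, int (Suc (length U)), tape_of V)
    (count_state p 0, int (length U + (j + k + 4)), tape_of V)"
proof -
  let ?h = "length U"
  have "reaches_red 1 (count_state p 3, int (Suc ?h), tape_of V) (count_state p 4, int (?h + 2), tape_of V)"
    using p V by (intro reaches_step_right_keep) (simp_all add: reduction_delta_count count_delta_def nth_append)
  also have "reaches_red j \<dots> (count_state p 4, int (?h + 2 + j), tape_of V)"
    using p V
    by (intro reaches_sweep_right_list[of "{2}"]) (auto simp: reduction_delta_count count_delta_def nth_append)
  also have "reaches_red 1 \<dots> (count_state p 5, int (?h + 3 + j), tape_of V)"
    using p V by (intro reaches_step_right_keep) (simp_all add: reduction_delta_count count_delta_def nth_append)
  also have "reaches_red k \<dots> (count_state p 5, int (?h + 3 + j + k), tape_of V)"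
    using p V
    by (intro reaches_sweep_right_list[of "{2}"]) (auto simp: reduction_delta_count count_delta_def nth_append)
  also have "reaches_red 1 \<dots> (count_state p 0, int (?h + (j + k + 4)), tape_of V)"
    using p V by (intro reaches_step_right_keep) (simp_all add: reduction_delta_count count_delta_def nth_append)
  finally show ?thesis by (elim reaches_mono) simp
qed

lemma count_instruction:
  assumes p: "1 \<le> p" "p \<le> 4"
    and W: "W = map bit_sym (enc_slp (P1 @ i # P2)) @ Y" and Y: "set Y \<subseteq> {5, 6}"
  shows "reaches_red (3 * length W) (count_state p 0, int (length (enc_slp P1)), tape_of W)
    (count_state p 0, int (length (enc_slp (P1 @ [i]))), tape_of (W @ [5]))"
proof -
  obtain o' j k where i: "i = (o', j, k)" by (cases i)
  obtain a b where ab: "enc_op o' = [a, b]" by (cases o') auto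
  let ?U = "map bit_sym (enc_slp P1)"
  have W_split: "W = ?U @ [bit_sym a, bit_sym b] @ replicate j 2 @ 1 # replicate k 2 @ 1 #
      map bit_sym (enc_slp P2) @ Y"
    using W i ab by (simp add: enc_slp_append enc_nat_def bit_sym_def)
  have "set W \<subseteq> {1, 2, 5, 6}" using W Y by (auto simp: bit_sym_def)
  then have "reaches_red (2 * length W + 1) (count_state p 0, int (length ?U), tape_of W)
      (count_state p 3, int (Suc (length ?U)), tape_of (W @ [5]))"
    using p W_split by (intro append_pending_true) (simp_all add: nth_append bit_sym_def)
  also have "reaches_red (j + k + 3) \<dots> (count_state p 0, int (length ?U + (j + k + 4)), tape_of (W @ [5]))"
    using p W_split by (intro skip_instruction_tail) simp_all
  finally have "reaches_red (2 * length W + 1 + (j + k + 3)) (count_state p 0, int (length ?U), tape_of W)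
      (count_state p 0, int (length ?U + (j + k + 4)), tape_of (W @ [5]))" .
  moreover have "length ?U + (j + k + 4) = length (enc_slp (P1 @ [i]))"
    using i by (simp add: enc_slp_append enc_nat_def)
  moreover have "2 * length W + 1 + (j + k + 3) \<le> 3 * length W"
    using W_split by simp
  ultimately show ?thesis by (metis reaches_mono length_map)
qed

lemma count_instructions:
  assumes p: "1 \<le> p" "p \<le> 4" and Y: "set Y \<subseteq> {5, 6}"
  shows "P1 @ P2 = P \<Longrightarrow>
    reaches_red (length P2 * (3 * (length (enc_slp P) + length Y + length P)))
      (count_state p 0, int (length (enc_slp P1)),
        tape_of (map bit_sym (enc_slp P) @ Y @ replicate (length P1) 5))
      (count_state p 0, int (length (enc_slp P)),
        tape_of (map bit_sym (enc_slp P) @ Y @ replicate (length P) 5))"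
proof (induction P2 arbitrary: P1)
  case Nil
  then show ?case by (simp add: reaches_refl)
next
  case (Cons i P2)
  let ?X = "map bit_sym (enc_slp P)"
  let ?W = "?X @ Y @ replicate (length P1) 5"
  have "length P1 < length P" using Cons.prems by auto
  then have time: "3 * length ?W \<le> 3 * (length (enc_slp P) + length Y + length P)" by simp
  have "set (Y @ replicate (length P1) 5) \<subseteq> {5, 6}" using Y by auto
  from count_instruction[OF p _ this, of ?W P1 i P2] Cons.prems
  have "reaches_red (3 * length ?W) (count_state p 0, int (length (enc_slp P1)), tape_of ?W)
      (count_state p 0, int (length (enc_slp (P1 @ [i]))), tape_of (?X @ Y @ replicate (length (P1 @ [i])) 5))"
    by (simp add: replicate_append_same)
  also have "reaches_red (length P2 * (3 * (length (enc_slp P) + length Y + length P))) \<dots>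
      (count_state p 0, int (length (enc_slp P)), tape_of (?X @ Y @ replicate (length P) 5))"
    using Cons.IH[of "P1 @ [i]"] Cons.prems by simp
  finally show ?case using time by (elim reaches_mono) simp
qed

lemma run_phase:
  fixes P :: "slp_instr list"
  assumes p: "1 \<le> p" "p \<le> 4" and Y: "set Y \<subseteq> {5, 6}" "Y \<noteq> []"
  defines "w \<equiv> map bit_sym (enc_slp P) @ Y @ replicate (length P) 5"
  shows "reaches_red (length P * (3 * length w) + length w + 12)
    (count_state p 0, 0, tape_of (map bit_sym (enc_slp P) @ Y))
    (after_phase_word p, int (length w + length (phase_word p) - 1), tape_of (w @ phase_word p))"
proof -
  let ?L = "length (enc_slp P)"
  have len_w: "length w = ?L + length Y + length P" by (simp add: w_def)
  have w_at_L: "w ! ?L \<in> {5, 6}" using Y by (cases Y) (auto simp: w_def nth_append)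
  have nonzero: "0 \<notin> set w" using Y by (auto simp: w_def bit_sym_def)
  have cells: "w ! (?L + i) \<noteq> 0" if "i < length Y + length P" for i
  proof -
    from that len_w have "w ! (?L + i) \<in> set w" by (intro nth_mem) simp
    with nonzero show ?thesis by metis
  qed
  have "reaches_red (length P * (3 * (?L + length Y + length P)))
      (count_state p 0, 0, tape_of (map bit_sym (enc_slp P) @ Y)) (count_state p 0, int ?L, tape_of w)"
    using count_instructions[OF p Y(1), of "[]" P P] by (simp add: w_def)
  also have "reaches_red 1 \<dots> (count_state p 6, int ?L, tape_of w)"
    using p w_at_L len_w Y(2)
    by (intro reaches_step) (auto simp: reduction_delta_count count_delta_def fun_upd_idem_iff)
  also have "reaches_red (length Y + length P) \<dots> (count_state p 6, int (?L + (length Y + length P)), tape_of w)"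
    using p len_w cells
    by (intro reaches_sweep_right_list[of "{s. s \<noteq> 0}"]) (auto simp: reduction_delta_count count_delta_def)
  also have "reaches_red 1 \<dots> (write_state p 0, int (length w), tape_of w)"
    using p len_w
    by (intro reaches_step) (auto simp: reduction_delta_count count_delta_def fun_upd_idem_iff)
  also have "reaches_red (length (phase_word p) + 1) \<dots>
      (after_phase_word p, int (length w + length (phase_word p) - 1), tape_of (w @ phase_word p))"
    using p by (intro write_phase_word) simp
  finally show ?thesis
    using length_phase_word_le[of p] by (elim reaches_mono) (simp add: len_w)
qed

lemma run_phase_and_rewind:
  fixes P :: "slp_instr list"
  assumes p: "1 \<le> p" "p \<le> 3" "p' = p + 1" and Y: "set Y \<subseteq> {5, 6}" "Y \<noteq> []"
    and len_Y: "length Y \<le> 3 * length P + 14"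
  defines "B \<equiv> length (enc_slp P) + 4 * length P + 16"
  shows "reaches_red (3 * length P * B + 2 * B + 30)
    (count_state p 0, 0, tape_of (map bit_sym (enc_slp P) @ Y))
    (count_state p' 0, 0, tape_of (map bit_sym (enc_slp P) @ Y @ replicate (length P) 5 @ phase_word p))"
proof -
  define w where "w = map bit_sym (enc_slp P) @ Y @ replicate (length P) 5"
  define j where "j = length w + length (phase_word p) - 1"
  have word: "0 < length (phase_word p)" "length (phase_word p) \<le> 9" "0 \<notin> set (phase_word p)"
    using p phase_word_nonempty length_phase_word_le phase_word_symbols[of 0 p] by auto
  have j_less: "j < length (w @ phase_word p)"
    using word(1) unfolding j_def length_append by linarith
  have "reaches_red (length P * (3 * length w) + length w + 12)
      (count_state p 0, 0, tape_of (map bit_sym (enc_slp P) @ Y))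
      (after_phase_word p, int j, tape_of (w @ phase_word p))"
    using run_phase[of p Y P] p Y unfolding w_def j_def by simp
  also have "(after_phase_word p, int j, tape_of (w @ phase_word p)) =
      (count_state p' 7, int j, tape_of (w @ phase_word p))"
    using p by (simp add: after_phase_word_def)
  also have "reaches_red (j + 2) \<dots> (count_state p' 0, 0, tape_of (w @ phase_word p))"
    using p Y word j_less by (intro rewind_to_start) (auto simp: w_def bit_sym_def)
  finally have run: "reaches_red (length P * (3 * length w) + length w + 12 + (j + 2))
      (count_state p 0, 0, tape_of (map bit_sym (enc_slp P) @ Y))
      (count_state p' 0, 0, tape_of (w @ phase_word p))" .
  have "length w \<le> B" using len_Y by (simp add: w_def B_def)
  moreover from this have "length P * (3 * length w) \<le> 3 * length P * B" by simp
  ultimately have "length P * (3 * length w) + length w + 12 + (j + 2) \<le> 3 * length P * B + 2 * B + 30"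
    using word(2) unfolding j_def by linarith
  from reaches_mono[OF run this] show ?thesis by (simp add: w_def)
qed

definition pending_to_bit :: "nat \<Rightarrow> nat" where
  "pending_to_bit s = (if s = 5 then 2 else 1)"

lemma convert_pending:
  assumes "set Ys \<subseteq> {5, 6}"
  shows "reaches_red (length Ys) (9, int (length A + length Ys) - 1, tape_of (A @ Ys @ Z))
    (9, int (length A) - 1, tape_of (A @ map pending_to_bit Ys @ Z))"
  using assms
proof (induction Ys arbitrary: Z rule: rev_induct)
  case (snoc y Ys)
  define n where "n = length A + length Ys"
  have y: "y = 5 \<or> y = 6" using snoc.prems by simp
  have n: "n < length (A @ (Ys @ [y]) @ Z)" "(A @ (Ys @ [y]) @ Z) ! n = y"
    "(A @ (Ys @ [y]) @ Z)[n := pending_to_bit y] = A @ Ys @ (pending_to_bit y # Z)"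
    by (simp_all add: n_def nth_append list_update_append)
  have "reaches_red 1 (9, int n, tape_of (A @ (Ys @ [y]) @ Z)) (9, int n - 1, tape_of (A @ Ys @ (pending_to_bit y # Z)))"
  proof (rule reaches_step)
    show "tm_delta reduction_tm 9 (tape_of (A @ (Ys @ [y]) @ Z) (int n)) = (9, pending_to_bit y, -1)"
      using n y by (auto simp: reduction_delta_def control_delta_def pending_to_bit_def)
  qed (use n tape_of_update[OF n(1)] in simp_all)
  also have "reaches_red (length Ys) \<dots> (9, int (length A) - 1, tape_of (A @ map pending_to_bit (Ys @ [y]) @ Z))"
    using snoc.IH[of "pending_to_bit y # Z"] snoc.prems by (simp add: n_def)
  finally show ?case by (simp add: n_def)
qed (simp add: reaches_refl)

lemma run_last_phase:
  fixes P :: "slp_instr list"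
  assumes Y: "set Y \<subseteq> {5, 6}" "Y \<noteq> []" and len_Y: "length Y \<le> 3 * length P + 14"
  defines "B \<equiv> length (enc_slp P) + 4 * length P + 16"
  shows "reaches_red (3 * length P * B + 2 * B + 30)
    (count_state 4 0, 0, tape_of (map bit_sym (enc_slp P) @ Y))
    (200, int (length (enc_slp P)) - 1,
      tape_of (map bit_sym (enc_slp P) @ map pending_to_bit (Y @ replicate (length P) 5 @ [6])))"
proof -
  define X where "X = map bit_sym (enc_slp P)"
  define w where "w = X @ Y @ replicate (length P) 5"
  define Ys where "Ys = Y @ replicate (length P) 5 @ [6]"
  have "reaches_red (length P * (3 * length w) + length w + 12) (count_state 4 0, 0, tape_of (X @ Y))
      (after_phase_word 4, int (length w + length (phase_word 4) - 1), tape_of (w @ phase_word 4))"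
    using run_phase[of 4 Y P] Y unfolding X_def w_def by simp
  also have "(after_phase_word 4, int (length w + length (phase_word 4) - 1), tape_of (w @ phase_word 4)) =
      (9, int (length X + length Ys) - 1, tape_of (X @ Ys @ []))"
    by (simp add: after_phase_word_def w_def Ys_def phase_word_def)
  also have "reaches_red (length Ys) \<dots> (9, int (length X) - 1, tape_of (X @ map pending_to_bit Ys @ []))"
    using Y by (intro convert_pending) (auto simp: Ys_def)
  also have "reaches_red 1 \<dots> (200, int (length X) - 1, tape_of (X @ map pending_to_bit Ys))"
  proof (rule reaches_step)
    have "tape_of (X @ map pending_to_bit Ys) (int (length X) - 1) \<in> {0, 1, 2}"
    proof (cases X rule: rev_cases)
      case (snoc X' s)
      moreover have "set X \<subseteq> {1, 2}" by (auto simp: X_def bit_sym_def)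
      ultimately have "s \<in> {1, 2}" by auto
      with snoc show ?thesis using tape_of_nth[of "length X'" "X' @ s # map pending_to_bit Ys"] by simp
    qed simp
    then show "tm_delta reduction_tm 9 (tape_of (X @ map pending_to_bit Ys @ []) (int (length X) - 1)) =
        (200, tape_of (X @ map pending_to_bit Ys) (int (length X) - 1), 0)"
      by (auto simp: reduction_delta_def control_delta_def)
  qed simp_all
  finally have run: "reaches_red (length P * (3 * length w) + length w + 12 + length Ys + 1)
      (count_state 4 0, 0, tape_of (X @ Y)) (200, int (length X) - 1, tape_of (X @ map pending_to_bit Ys))" .
  have "length w \<le> B" "length Ys \<le> B" using len_Y by (simp_all add: w_def Ys_def B_def X_def)
  moreover from this(1) have "length P * (3 * length w) \<le> 3 * length P * B" by simp
  ultimately have "length P * (3 * length w) + length w + 12 + length Ys + 1 \<le> 3 * length P * B + 2 * B + 30"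
    by linarith
  from reaches_mono[OF run this] show ?thesis by (simp add: X_def Ys_def)
qed

lemma pending_suffix_eq_enc_neg_square_suffix:
  "map pending_to_bit (phase_word 0 @ replicate m 5 @ phase_word 1 @ replicate m 5 @ phase_word 2 @
      replicate m 5 @ phase_word 3 @ replicate m 5 @ phase_word 4) =
    map bit_sym (enc_slp (neg_square_suffix m))"
  by (simp add: pending_to_bit_def phase_word_def neg_square_suffix_def enc_nat_def bit_sym_def)

lemma accepting_start:
  fixes P :: "slp_instr list"
  defines "X \<equiv> map bit_sym (enc_slp P)"
  shows "reaches_red (2 * length X + 7) (tm_init (enc_slp P)) (count_state 1 0, 0, tape_of (X @ phase_word 0))"
proof -
  let ?L = "length X"
  have nonzero: "0 \<notin> set (X @ phase_word 0)" by (auto simp: X_def phase_word_def bit_sym_def)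
  have "reaches_red ?L (tm_init (enc_slp P)) (0, int ?L, tape_of X)"
    using checker_accepts[OF enc_dfa_run_enc_slp] by (simp add: tm_init_eq_tape_of X_def)
  also have "reaches_red 1 \<dots> (write_state 0 0, int ?L, tape_of X)"
    by (intro reaches_step) (auto simp: reduction_delta_def control_delta_def fun_upd_idem_iff)
  also have "reaches_red 3 \<dots> (count_state 1 7, int (?L + 1), tape_of (X @ phase_word 0))"
    using write_phase_word[of 0 X] by (simp add: phase_word_def after_phase_word_def numeral_3_eq_3)
  also have "reaches_red (?L + 3) \<dots> (count_state 1 0, 0, tape_of (X @ phase_word 0))"
    using rewind_to_start[of 1 "X @ phase_word 0" "?L + 1"] nonzero
    by (simp add: phase_word_def numeral_3_eq_3)
  finally show ?thesis by (elim reaches_mono) simp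
qed

lemma accepting_run:
  fixes P :: "slp_instr list"
  defines "L \<equiv> length (enc_slp P)" and "m \<equiv> length P"
  defines "B \<equiv> L + 4 * m + 16"
  shows "reaches_red (2 * L + 7 + 4 * (3 * m * B + 2 * B + 30)) (tm_init (enc_slp P))
    (200, int L - 1, tape_of (map bit_sym (enc_slp (P @ neg_square_suffix m))))"
proof -
  define X where "X = map bit_sym (enc_slp P)"
  define Y1 where "Y1 = phase_word 0"
  define Y2 where "Y2 = Y1 @ replicate m 5 @ phase_word 1"
  define Y3 where "Y3 = Y2 @ replicate m 5 @ phase_word 2"
  define Y4 where "Y4 = Y3 @ replicate m 5 @ phase_word 3"
  have Ys: "set Y1 \<subseteq> {5, 6}" "set Y2 \<subseteq> {5, 6}" "set Y3 \<subseteq> {5, 6}" "set Y4 \<subseteq> {5, 6}"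
    using phase_word_symbols by (fastforce simp: Y1_def Y2_def Y3_def Y4_def)+
  have Ys_nonempty: "Y1 \<noteq> []" "Y2 \<noteq> []" "Y3 \<noteq> []" "Y4 \<noteq> []"
    by (simp_all add: Y1_def Y2_def Y3_def Y4_def phase_word_def)
  have len_Ys: "length Y1 \<le> 3 * m + 14" "length Y2 \<le> 3 * m + 14" "length Y3 \<le> 3 * m + 14"
      "length Y4 \<le> 3 * m + 14"
    by (simp_all add: Y1_def Y2_def Y3_def Y4_def phase_word_def)
  have "reaches_red (2 * L + 7) (tm_init (enc_slp P)) (count_state 1 0, 0, tape_of (X @ Y1))"
    using accepting_start[of P] by (simp add: X_def Y1_def L_def)
  also have "reaches_red (3 * m * B + 2 * B + 30) \<dots> (count_state 2 0, 0, tape_of (X @ Y2))"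
    unfolding X_def Y2_def B_def L_def m_def
    by (rule run_phase_and_rewind) (use Ys Ys_nonempty len_Ys in \<open>simp_all add: m_def\<close>)
  also have "reaches_red (3 * m * B + 2 * B + 30) \<dots> (count_state 3 0, 0, tape_of (X @ Y3))"
    unfolding X_def Y3_def B_def L_def m_def
    by (rule run_phase_and_rewind) (use Ys Ys_nonempty len_Ys in \<open>simp_all add: m_def\<close>)
  also have "reaches_red (3 * m * B + 2 * B + 30) \<dots> (count_state 4 0, 0, tape_of (X @ Y4))"
    unfolding X_def Y4_def B_def L_def m_def
    by (rule run_phase_and_rewind) (use Ys Ys_nonempty len_Ys in \<open>simp_all add: m_def\<close>)
  also have "reaches_red (3 * m * B + 2 * B + 30) \<dots>
      (200, int L - 1, tape_of (X @ map pending_to_bit (Y4 @ replicate m 5 @ [6])))"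
    unfolding X_def B_def L_def m_def
    by (rule run_last_phase) (use Ys Ys_nonempty len_Ys in \<open>simp_all add: m_def\<close>)
  also have "(200, int L - 1, tape_of (X @ map pending_to_bit (Y4 @ replicate m 5 @ [6]))) =
      (200, int L - 1, tape_of (map bit_sym (enc_slp (P @ neg_square_suffix m))))"
    using pending_suffix_eq_enc_neg_square_suffix[of m]
    by (simp add: X_def Y1_def Y2_def Y3_def Y4_def enc_slp_append phase_word_def)
  finally show ?thesis by (elim reaches_mono) simp
qed

lemma accepting_time_bound:
  fixes L m :: nat
  assumes "4 * m \<le> L"
  shows "2 * L + 7 + 4 * (3 * m * (L + 4 * m + 16) + 2 * (L + 4 * m + 16) + 30) \<le> 400 * L\<^sup>2 + 400"
proof -
  define B where "B = L + 4 * m + 16"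
  have "m * B \<le> L * (2 * L + 16)" using assms by (intro mult_le_mono) (simp_all add: B_def)
  then have "m * B \<le> 2 * (L * L) + 16 * L" by (simp add: algebra_simps)
  moreover have "B \<le> 2 * L + 16" "L \<le> L * L" using assms by (simp_all add: B_def le_square)
  moreover have "a \<le> 2 * c + 16 * L \<Longrightarrow> b \<le> 2 * L + 16 \<Longrightarrow> L \<le> c \<Longrightarrow>
      2 * L + 7 + 4 * (3 * a + 2 * b + 30) \<le> 400 * c + 400" for a b c :: nat
    by (simp add: algebra_simps)
  ultimately have "2 * L + 7 + 4 * (3 * (m * B) + 2 * B + 30) \<le> 400 * (L * L) + 400" by blast
  then show ?thesis by (simp only: B_def power2_eq_square mult.assoc)
qed

lemma rejecting_run:
  assumes "x \<notin> range enc_slp"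
  shows "\<exists>t. reaches_red (2 * length x + 6) (tm_init x) (200, 2, t) \<and> tape_holds t [True, True]"
proof -
  define X where "X = map bit_sym x"
  have nonzero: "0 \<notin> set X" by (auto simp: X_def bit_sym_def)
  from assms have "enc_dfa_run 0 x \<noteq> Some 0" by (simp add: enc_dfa_accepts_iff)
  then obtain n where n: "n < length x"
    and checked: "reaches_red (length x + 1) (0, 0, tape_of X) (5, int n, tape_of X)"
    unfolding X_def by (rule checker_rejects)
  have cells: "\<forall>i<Suc n. tape_of X (int n - int i) \<in> {s. s \<noteq> 0}"
  proof (intro allI impI)
    fix i assume "i < Suc n"
    with n have i: "n - i < length X" "int n - int i = int (n - i)" by (auto simp: X_def)
    from i(1) have "X ! (n - i) \<in> set X" by (rule nth_mem)
    with nonzero show "tape_of X (int n - int i) \<in> {s. s \<noteq> 0}"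
      unfolding i(2) tape_of_nth[OF i(1)] by (metis mem_Collect_eq)
  qed
  have "reaches_red (length x + 1) (tm_init x) (5, int n, tape_of X)"
    using checked by (simp add: tm_init_eq_tape_of X_def)
  also have "reaches_red (Suc n) \<dots> (5, int n - int (Suc n), tape_of X)"
    using cells
    by (intro reaches_sweep_left[of "{s. s \<noteq> 0}"]) (simp_all add: reduction_delta_def control_delta_def)
  also have "reaches_red 1 \<dots> (6, 0, tape_of X)"
    by (intro reaches_step) (simp_all add: reduction_delta_def control_delta_def fun_upd_idem_iff)
  also have "reaches_red 1 \<dots> (7, 1, (tape_of X)(0 := 2))"
    by (intro reaches_step) (simp_all add: reduction_delta_def control_delta_def)
  also have "reaches_red 1 \<dots> (8, 2, (tape_of X)(0 := 2, 1 := 2))"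
    by (intro reaches_step) (simp_all add: reduction_delta_def control_delta_def)
  also have "reaches_red 1 \<dots> (200, 2, (tape_of X)(0 := 2, 1 := 2, 2 := 0))"
    by (intro reaches_step) (simp_all add: reduction_delta_def control_delta_def)
  finally have "reaches_red (2 * length x + 6) (tm_init x) (200, 2, (tape_of X)(0 := 2, 1 := 2, 2 := 0))"
    using n by (elim reaches_mono) simp
  moreover have "tape_holds ((tape_of X)(0 := 2, 1 := 2, 2 := 0)) [True, True]"
    by (auto simp: tape_holds_def bit_sym_def less_Suc_eq)
  ultimately show ?thesis by blast
qed

lemma reduction_tm_computes_equ_to_sos:
  "computes_within reduction_tm equ_to_sos (\<lambda>n. 400 * n\<^sup>2 + 400)"
proof (rule reaches_halt_imp_computes_within)
  fix x
  show "\<exists>h t. reaches_red (400 * (length x)\<^sup>2 + 400) (tm_init x) (tm_halt reduction_tm, h, t) \<and>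
      tape_holds t (equ_to_sos x)"
  proof (cases "x \<in> range enc_slp")
    case True
    then obtain P where x: "x = enc_slp P" by blast
    have "reaches_red (400 * (length (enc_slp P))\<^sup>2 + 400) (tm_init (enc_slp P))
        (200, int (length (enc_slp P)) - 1, tape_of (map bit_sym (enc_slp (P @ neg_square_suffix (length P)))))"
      using accepting_run[of P] accepting_time_bound[OF length_enc_slp_ge[of P]] by (rule reaches_mono)
    then show ?thesis
      unfolding x equ_to_sos_enc_slp reduction_tm_simps using tape_holds_tape_of by blast
  next
    case False
    then obtain t where t: "reaches_red (2 * length x + 6) (tm_init x) (200, 2, t)"
      "tape_holds t [True, True]"
      using rejecting_run by blast
    have "2 * length x + 6 \<le> 400 * (length x)\<^sup>2 + 400"
      using le_square[of "length x"] unfolding power2_eq_square by linarith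
    with t(1) have "reaches_red (400 * (length x)\<^sup>2 + 400) (tm_init x) (200, 2, t)"
      by (rule reaches_mono)
    with t(2) False show ?thesis
      unfolding equ_to_sos_def reduction_tm_simps by auto
  qed
qed

lemma poly_time_computable_equ_to_sos: "poly_time_computable equ_to_sos"
  unfolding poly_time_computable_def
  using valid_reduction_tm reduction_tm_computes_equ_to_sos by blast

theorem mainTheorem9:
  shows "EquSLP \<le>\<^sub>P ThreeSoSSLP"
  unfolding poly_reduces_def using poly_time_computable_equ_to_sos equ_to_sos_correct by blast

end
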